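(* Consider a generalized linear model with data $\mathcal{D}=(X,\mathbf{y})$, $X\in\mathbb{R}^{n\times(p+1)}$ (first column the intercept column of ones), log-likelihood $\ell(\beta_0,\boldsymbol{\beta};\mathcal{D})$ with $-\ell$ convex in $(\beta_0,\boldsymbol{\beta})$, $m$ mandatory predictors (columns $1,\dots,m$), and fix $\lambda\ge 0$. For $\mathbf{t}=(t_1,\dots,t_{p-m})\in[0,1]^{p-m}$ let $T_{\mathbf{t}}=\mathrm{diag}(1,\dots,1,t_1,\dots,t_{p-m})\in\mathbb{R}^{p\times p}$ (with $m$ leading ones) and $\Gamma_{\mathbf{t}}=\sqrt{I-T_{\mathbf{t}}^2}$ (elementwise square root of the diagonal). For $\delta>0$ define $$h_{\delta,\lambda}(\mathbf{t},\beta_0,\boldsymbol{\beta})=-\tfrac1n\ell(\beta_0,T_{\mathbf{t}}\boldsymbol{\beta};\mathcal{D})+\lambda\|\boldsymbol{\beta}\|_2^2+\delta\|\Gamma_{\mathbf{t}}\boldsymbol{\beta}\|_2^2,\qquad f_{\delta,\lambda}(\mathbf{t})=\min_{\beta_0\in\mathbb{R},\,\boldsymbol{\beta}\in\mathbb{R}^p}h_{\delta,\lambda}(\mathbf{t},\beta_0,\boldsymbol{\beta}).$$ Then for every fixed $\mathbf{t}\in(0,1)^{p-m}$, the map $\delta\mapsto f_{\delta,\lambda}(\mathbf{t})$ is monotone non-decreasing and continuous on $\delta>0$.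
   Context: $\ell(\beta_0,\boldsymbol{\beta};\mathcal{D})$ denotes the log-likelihood of the GLM, which depends on the coefficients through the linear predictors $\beta_0+\mathbf{x}_i^\top\boldsymbol{\beta}$, $i=1,\dots,n$. The value function $f_{\delta,\lambda}(\mathbf{t})$ is the minimum (assumed attained) of the inner objective over the coefficients. *)

theory Defs
  imports "HOL-Analysis.Analysis"
begin

text \<open>Coefficient vectors in R^p are represented as functions nat => real, indexed by 1..p;
  t in [0,1]^(p-m) is a function nat => real indexed by 1..p-m.
  The design matrix (without the intercept column) is X :: nat => nat => real, rows 1..n, columns 1..p.\<close>

definition linpred :: "nat \<Rightarrow> (nat \<Rightarrow> nat \<Rightarrow> real) \<Rightarrow> real \<Rightarrow> (nat \<Rightarrow> real) \<Rightarrow> nat \<Rightarrow> real" where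
  "linpred p X b0 b i = b0 + (\<Sum>j=1..p. X i j * b j)"

definition Tdiag :: "nat \<Rightarrow> (nat \<Rightarrow> real) \<Rightarrow> nat \<Rightarrow> real" where
  "Tdiag m t j = (if j \<le> m then 1 else t (j - m))"

definition Gdiag :: "nat \<Rightarrow> (nat \<Rightarrow> real) \<Rightarrow> nat \<Rightarrow> real" where
  "Gdiag m t j = sqrt (1 - (Tdiag m t j)\<^sup>2)"

definition hfun :: "nat \<Rightarrow> nat \<Rightarrow> nat \<Rightarrow> (real \<Rightarrow> (nat \<Rightarrow> real) \<Rightarrow> real) \<Rightarrow> real \<Rightarrow> real
    \<Rightarrow> (nat \<Rightarrow> real) \<Rightarrow> real \<Rightarrow> (nat \<Rightarrow> real) \<Rightarrow> real" where
  "hfun n p m ll lam delta t b0 b =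
     - (1 / real n) * ll b0 (\<lambda>j. Tdiag m t j * b j)
     + lam * (\<Sum>j=1..p. (b j)\<^sup>2)
     + delta * (\<Sum>j=1..p. (Gdiag m t j * b j)\<^sup>2)"

text \<open>Value function: the infimum (= minimum, when attained) of h over beta_0 and beta in R^p.\<close>
definition ffun :: "nat \<Rightarrow> nat \<Rightarrow> nat \<Rightarrow> (real \<Rightarrow> (nat \<Rightarrow> real) \<Rightarrow> real) \<Rightarrow> real \<Rightarrow> real
    \<Rightarrow> (nat \<Rightarrow> real) \<Rightarrow> real" where
  "ffun n p m ll lam delta t =
     (INF bb \<in> {bb :: real \<times> (nat \<Rightarrow> real). \<forall>j. j \<notin> {1..p} \<longrightarrow> snd bb j = 0}.
        hfun n p m ll lam delta t (fst bb) (snd bb))"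

end

theory Submission
  imports Defs
begin

text \<open>For fixed coefficients, h is affine in delta with slope the penalty norm squared of Gamma_t beta,
  which is nonnegative. So f, the pointwise minimum of these affine functions, is nondecreasing and
  concave in delta, and a concave function on an open interval is continuous.\<close>

lemma cINF_eq_attained_min:
  fixes f :: "'i \<Rightarrow> 'a::conditionally_complete_lattice"
  assumes "i \<in> I" and "\<And>j. j \<in> I \<Longrightarrow> f i \<le> f j"
  shows "(INF j\<in>I. f j) = f i"
  using assms by (intro cInf_eq_minimum) auto

lemma mono_on_cINF_attained:
  fixes f :: "'i \<Rightarrow> 'a::order \<Rightarrow> real"
  assumes mono: "\<And>i. i \<in> I \<Longrightarrow> mono_on D (f i)"
    and attained: "\<And>x. x \<in> D \<Longrightarrow> \<exists>i\<in>I. \<forall>j\<in>I. f i x \<le> f j x"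
  shows "mono_on D (\<lambda>x. INF i\<in>I. f i x)"
proof (rule mono_onI)
  fix x y assume "x \<in> D" "y \<in> D" "x \<le> y"
  obtain i where i: "i \<in> I" "\<forall>j\<in>I. f i x \<le> f j x" using attained \<open>x \<in> D\<close> by blast
  obtain k where k: "k \<in> I" "\<forall>j\<in>I. f k y \<le> f j y" using attained \<open>y \<in> D\<close> by blast
  have "(INF j\<in>I. f j x) = f i x" using i by (intro cINF_eq_attained_min) auto
  also have "\<dots> \<le> f k x" using i k by blast
  also have "\<dots> \<le> f k y" using mono_onD[OF mono[OF k(1)]] \<open>x \<in> D\<close> \<open>y \<in> D\<close> \<open>x \<le> y\<close> .
  also have "\<dots> = (INF j\<in>I. f j y)" using k by (intro cINF_eq_attained_min[symmetric]) auto
  finally show "(INF j\<in>I. f j x) \<le> (INF j\<in>I. f j y)" .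
qed

lemma concave_on_cINF_attained:
  fixes f :: "'i \<Rightarrow> 'a::real_vector \<Rightarrow> real"
  assumes "convex D"
    and concave: "\<And>i. i \<in> I \<Longrightarrow> concave_on D (f i)"
    and attained: "\<And>x. x \<in> D \<Longrightarrow> \<exists>i\<in>I. \<forall>j\<in>I. f i x \<le> f j x"
  shows "concave_on D (\<lambda>x. INF i\<in>I. f i x)"
  unfolding concave_on_iff
proof (intro conjI ballI allI impI)
  fix x y :: 'a and u v :: real
  assume "x \<in> D" "y \<in> D" "0 \<le> u" "0 \<le> v" "u + v = 1"
  then have z: "u *\<^sub>R x + v *\<^sub>R y \<in> D" using \<open>convex D\<close> by (simp add: convexD)
  obtain k where k: "k \<in> I" "\<forall>j\<in>I. f k (u *\<^sub>R x + v *\<^sub>R y) \<le> f j (u *\<^sub>R x + v *\<^sub>R y)"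
    using attained[OF z] by blast
  have INF_le: "(INF j\<in>I. f j w) \<le> f k w" if "w \<in> D" for w
  proof -
    obtain i where "i \<in> I" "\<forall>j\<in>I. f i w \<le> f j w" using attained \<open>w \<in> D\<close> by blast
    then show ?thesis using k(1) by (subst cINF_eq_attained_min) auto
  qed
  have "u * (INF j\<in>I. f j x) + v * (INF j\<in>I. f j y) \<le> u * f k x + v * f k y"
    using INF_le \<open>x \<in> D\<close> \<open>y \<in> D\<close> \<open>0 \<le> u\<close> \<open>0 \<le> v\<close> by (intro add_mono mult_left_mono) auto
  also have "\<dots> \<le> f k (u *\<^sub>R x + v *\<^sub>R y)"
    using concave[OF k(1)] \<open>x \<in> D\<close> \<open>y \<in> D\<close> \<open>0 \<le> u\<close> \<open>0 \<le> v\<close> \<open>u + v = 1\<close>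
    unfolding concave_on_iff by simp
  also have "\<dots> = (INF j\<in>I. f j (u *\<^sub>R x + v *\<^sub>R y))"
    using k by (intro cINF_eq_attained_min[symmetric]) auto
  finally show "u * (INF j\<in>I. f j x) + v * (INF j\<in>I. f j y) \<le> (INF j\<in>I. f j (u *\<^sub>R x + v *\<^sub>R y))" .
qed (rule \<open>convex D\<close>)

lemma concave_on_continuous:
  fixes S :: "'a::euclidean_space set"
  assumes "open S" "concave_on S f"
  shows "continuous_on S f"
proof -
  have "continuous_on S (\<lambda>x. - f x)"
    using assms by (intro convex_on_continuous) (simp_all add: concave_on_def)
  then show ?thesis using continuous_on_minus by fastforce
qed

lemma concave_on_affine_real:
  assumes "convex S"
  shows "concave_on S (\<lambda>x::real. a + x * g)"
  unfolding concave_on_iff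
proof (intro conjI ballI allI impI)
  fix x y u v :: real assume "u + v = 1"
  have "u * (a + x * g) + v * (a + y * g) = (u + v) * a + (u * x + v * y) * g"
    by (simp add: algebra_simps)
  then show "u * (a + x * g) + v * (a + y * g) \<le> a + (u *\<^sub>R x + v *\<^sub>R y) * g"
    using \<open>u + v = 1\<close> by simp
qed (rule assms)

lemma mono_on_affine_real: "0 \<le> g \<Longrightarrow> mono_on S (\<lambda>x::real. a + x * g)"
  by (intro mono_onI) (simp add: mult_right_mono)

lemma hfun_affine_in_delta:
  "hfun n p m ll lam delta t b0 b
     = hfun n p m ll lam 0 t b0 b + delta * (\<Sum>j=1..p. (Gdiag m t j * b j)\<^sup>2)"
  unfolding hfun_def by simp

theorem proposition1:
  fixes n p m :: nat
    and X :: "nat \<Rightarrow> nat \<Rightarrow> real"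
    and ll :: "real \<Rightarrow> (nat \<Rightarrow> real) \<Rightarrow> real"
    and lam :: real
    and t :: "nat \<Rightarrow> real"
  assumes n_pos: "0 < n"
    and m_le_p: "m \<le> p"
    and glm: "\<And>b0 b c0 c. (\<forall>i\<in>{1..n}. linpred p X b0 b i = linpred p X c0 c i)
                \<Longrightarrow> ll b0 b = ll c0 c"
    and convex: "\<And>a0 a c0 c u. 0 \<le> u \<Longrightarrow> u \<le> 1 \<Longrightarrow>
        - ll ((1 - u) * a0 + u * c0) (\<lambda>j. (1 - u) * a j + u * c j)
          \<le> (1 - u) * (- ll a0 a) + u * (- ll c0 c)"
    and lam_nonneg: "0 \<le> lam"
    and t_in: "\<forall>k\<in>{1..p - m}. 0 < t k \<and> t k < 1"
    and attained: "\<forall>delta>0. \<exists>b0 b. (\<forall>j. j \<notin> {1..p} \<longrightarrow> b j = 0) \<and>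
        (\<forall>c0 c. hfun n p m ll lam delta t b0 b \<le> hfun n p m ll lam delta t c0 c)"
  shows "mono_on {0<..} (\<lambda>delta. ffun n p m ll lam delta t)
       \<and> continuous_on {0<..} (\<lambda>delta. ffun n p m ll lam delta t)"
proof -
  define I where "I = {bb :: real \<times> (nat \<Rightarrow> real). \<forall>j. j \<notin> {1..p} \<longrightarrow> snd bb j = 0}"
  define h where "h = (\<lambda>bb delta. hfun n p m ll lam delta t (fst bb) (snd bb))"
  have f_eq: "(\<lambda>delta. ffun n p m ll lam delta t) = (\<lambda>delta. INF bb\<in>I. h bb delta)"
    unfolding ffun_def I_def h_def ..
  have h_affine: "h bb = (\<lambda>delta. hfun n p m ll lam 0 t (fst bb) (snd bb)
                              + delta * (\<Sum>j=1..p. (Gdiag m t j * snd bb j)\<^sup>2))" for bb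
    unfolding h_def by (subst hfun_affine_in_delta) simp
  have min_attained: "\<exists>bb\<in>I. \<forall>cc\<in>I. h bb delta \<le> h cc delta" if pos: "delta \<in> {0<..}" for delta
  proof -
    obtain b0 b where "\<forall>j. j \<notin> {1..p} \<longrightarrow> b j = 0"
      and "\<forall>c0 c. hfun n p m ll lam delta t b0 b \<le> hfun n p m ll lam delta t c0 c"
      using attained pos by auto
    then show ?thesis by (intro bexI[of _ "(b0, b)"]) (auto simp: I_def h_def)
  qed
  have "mono_on {0<..} (\<lambda>delta. INF bb\<in>I. h bb delta)"
    using min_attained unfolding h_affine
    by (intro mono_on_cINF_attained mono_on_affine_real sum_nonneg) auto
  moreover have "concave_on {0<..} (\<lambda>delta. INF bb\<in>I. h bb delta)"
    using min_attained unfolding h_affine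
    by (intro concave_on_cINF_attained concave_on_affine_real) (auto simp: convex_real_interval)
  then have "continuous_on {0<..} (\<lambda>delta. INF bb\<in>I. h bb delta)"
    by (intro concave_on_continuous) auto
  ultimately show ?thesis unfolding f_eq ..
qed

end
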